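(* Let $S_{p/q}=\{\mathrm{span}(n) : n\in\mathbb{N}\}\subseteq\mathbb{R}$. (i) If $p<2q$, then $S_{p/q}$ is dense in the interval $[0,\ \rho(M_0)]$. (ii) If $p>2q$, then $S_{p/q}$ is nowhere dense in $\mathbb{R}$.
   Context: Let $p>q>1$ be coprime integers, $A_p=\{0,\dots,p-1\}$, $A_q=\{0,\dots,q-1\}$. For $n\in\mathbb{N}$ and $a\in\mathbb{Z}$, let $\tau(n,a)=\frac{np+a}{q}$, defined only when $q$ divides $np+a$. Let $\mathcal{T}_{p/q}$ be the deterministic automaton with state set $\mathbb{N}$, alphabet $A_p$, initial state $0$, and transitions $n\xrightarrow{a}\tau(n,a)$ for $a\in A_p$ with $\tau(n,a)$ defined. Every state $n$ has exactly one outgoing transition labelled by a letter of $A_q$ and exactly one labelled by a letter of $\{p-q,\dots,p-1\}$; the minimal word $\mu_n$ (resp. maximal word $M_n$) is the unique infinite word over $A_q$ (resp. over $\{p-q,\dots,p-1\}$) labelling a path of $\mathcal{T}_{p/q}$ starting at state $n$. For an infinite word $a_1a_2a_3\cdots$ of integers, its real value is $\rho(a_1a_2\cdots)=\sum_{i\ge 1} a_i\left(\frac{p}{q}\right)^{-i}$. The span of $n$ is $\mathrm{span}(n)=\rho(M_n)-\rho(\mu_n)$. *)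

theory Defs
  imports "HOL-Analysis.Analysis"
begin

definition tau_defined :: "nat \<Rightarrow> nat \<Rightarrow> nat \<Rightarrow> nat \<Rightarrow> bool" where
  "tau_defined p q n a \<longleftrightarrow> a < p \<and> q dvd (n * p + a)"

definition tau :: "nat \<Rightarrow> nat \<Rightarrow> nat \<Rightarrow> nat \<Rightarrow> nat" where
  "tau p q n a = (n * p + a) div q"

text \<open>Infinite words are sequences nat => nat, index 0 being the first letter a_1.
  The state reached after reading the first i letters of w from n:\<close>
fun run :: "nat \<Rightarrow> nat \<Rightarrow> nat \<Rightarrow> (nat \<Rightarrow> nat) \<Rightarrow> nat \<Rightarrow> nat" where
  "run p q n w 0 = n"
| "run p q n w (Suc i) = tau p q (run p q n w i) (w i)"

definition labels_path :: "nat \<Rightarrow> nat \<Rightarrow> nat \<Rightarrow> (nat \<Rightarrow> nat) \<Rightarrow> bool" where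
  "labels_path p q n w \<longleftrightarrow> (\<forall>i. tau_defined p q (run p q n w i) (w i))"

definition min_word :: "nat \<Rightarrow> nat \<Rightarrow> nat \<Rightarrow> (nat \<Rightarrow> nat)" where
  "min_word p q n = (THE w. (\<forall>i. w i < q) \<and> labels_path p q n w)"

definition max_word :: "nat \<Rightarrow> nat \<Rightarrow> nat \<Rightarrow> (nat \<Rightarrow> nat)" where
  "max_word p q n = (THE w. (\<forall>i. p - q \<le> w i \<and> w i < p) \<and> labels_path p q n w)"

definition rho :: "nat \<Rightarrow> nat \<Rightarrow> (nat \<Rightarrow> nat) \<Rightarrow> real" where
  "rho p q w = (\<Sum>i. real (w i) * (real q / real p) ^ (Suc i))"

definition span :: "nat \<Rightarrow> nat \<Rightarrow> nat \<Rightarrow> real" where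
  "span p q n = rho p q (max_word p q n) - rho p q (min_word p q n)"

end

theory Submission
  imports Defs
begin

text \<open>Write C x = \<lceil>x p / q\<rceil> and F x = \<lfloor>x p / q\<rfloor>. The minimal and maximal words from n pass through the
  states C^k n and C^k (n + 1) - 1, so span n / q is the limit of g_k (q/p)^k for the gaps
  g_k = C^k (n + 1) - C^k n. Each gap is F or C of the previous one, and since p and q are coprime,
  shifting n by multiples of q^K realises every such path from 1 up to length K. Along any such path
  c the values c_k (q/p)^k converge to a limit within (q/p)^(K+1) / (1 - q/p) of c_K (q/p)^K, so
  span n lies in one of at most 2^K intervals of length O((q/p)^K). If p > 2q these intervals have
  total length tending to 0, which leaves the closure without interior. If p < 2q, the limits along
  F-orbits of d + 1 lie below those along C-orbits of d, so the ranges of attainable limits overlap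
  and a greedy choice of path approximates every point of [0, \<rho>(M_0)].\<close>

lemma geometric_increments_convergent:
  fixes a :: "nat \<Rightarrow> real"
  assumes "0 \<le> r" "r < 1" and step: "\<And>k. \<bar>a (Suc k) - a k\<bar> \<le> r ^ Suc k"
  shows "convergent a"
proof -
  have summable: "summable (\<lambda>k. a (Suc k) - a k)"
  proof (rule summable_comparison_test')
    show "summable (\<lambda>k. r * r ^ k)"
      using assms by (intro summable_mult summable_geometric) auto
    show "norm (a (Suc k) - a k) \<le> r * r ^ k" for k
      using step[of k] by simp
  qed
  have "(\<lambda>n. a n - a 0) \<longlonglongrightarrow> (\<Sum>k. a (Suc k) - a k)"
    using summable_LIMSEQ[OF summable] unfolding sum_lessThan_telescope .
  then have "(\<lambda>n. a n - a 0 + a 0) \<longlonglongrightarrow> (\<Sum>k. a (Suc k) - a k) + a 0"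
    by (intro tendsto_intros)
  then show ?thesis
    by (auto intro: convergentI)
qed

lemma geometric_increments_tail:
  fixes a :: "nat \<Rightarrow> real"
  assumes "0 \<le> r" "r < 1" and step: "\<And>k. \<bar>a (Suc k) - a k\<bar> \<le> r ^ Suc k"
    and lim: "a \<longlonglongrightarrow> L"
  shows "\<bar>L - a K\<bar> \<le> r / (1 - r) * r ^ K"
proof -
  have partial: "\<bar>a (K + j) - a K\<bar> \<le> r ^ Suc K * (1 - r ^ j) / (1 - r)" for j
  proof (induction j)
    case (Suc j)
    have "\<bar>a (K + Suc j) - a K\<bar> \<le> r ^ Suc K * (1 - r ^ j) / (1 - r) + r ^ Suc (K + j)"
      using Suc step[of "K + j"] by simp
    also have "\<dots> = r ^ Suc K * (1 - r ^ Suc j) / (1 - r)"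
      using \<open>r < 1\<close> by (simp add: divide_simps power_add algebra_simps)
    finally show ?case .
  qed simp
  have "\<bar>a (j + K) - a K\<bar> \<le> r / (1 - r) * r ^ K" for j
  proof -
    have "r ^ Suc K * (1 - r ^ j) / (1 - r) \<le> r ^ Suc K / (1 - r)"
      using assms(1,2) by (intro divide_right_mono) (auto simp: mult_left_le)
    then show ?thesis
      using partial[of j] by (simp add: add.commute)
  qed
  moreover have "(\<lambda>j. \<bar>a (j + K) - a K\<bar>) \<longlonglongrightarrow> \<bar>L - a K\<bar>"
    by (intro tendsto_intros LIMSEQ_ignore_initial_segment lim)
  ultimately show ?thesis
    by (intro LIMSEQ_le_const2) auto
qed

lemma interior_closure_empty_if_thin_covers:
  fixes S :: "real set" and C :: "nat \<Rightarrow> real set" and \<epsilon> :: "nat \<Rightarrow> real"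
  assumes fin: "\<And>K. finite (C K)" and eps: "\<And>K. 0 \<le> \<epsilon> K"
    and cover: "\<And>K. S \<subseteq> (\<Union>c\<in>C K. {c - \<epsilon> K .. c + \<epsilon> K})"
    and thin: "(\<lambda>K. real (card (C K)) * \<epsilon> K) \<longlonglongrightarrow> 0"
  shows "interior (closure S) = {}"
proof (rule ccontr)
  assume "interior (closure S) \<noteq> {}"
  then obtain x where "x \<in> interior (closure S)"
    by blast
  then obtain e where "e > 0" and ball: "ball x e \<subseteq> closure S"
    unfolding mem_interior by blast
  have "2 * e \<le> 2 * (real (card (C K)) * \<epsilon> K)" for K
  proof -
    let ?U = "\<Union>c\<in>C K. {c - \<epsilon> K .. c + \<epsilon> K}"
    have "compact ?U"
      using fin by (intro compact_UN) auto
    have "closure S \<subseteq> ?U"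
      using cover compact_imp_closed[OF \<open>compact ?U\<close>] by (rule closure_minimal)
    then have "measure lborel (ball x e) \<le> measure lborel ?U"
      using ball fmeasurable_compact[OF \<open>compact ?U\<close>]
      by (intro measure_mono_fmeasurable) auto
    also have "\<dots> \<le> (\<Sum>c\<in>C K. measure lborel {c - \<epsilon> K .. c + \<epsilon> K})"
      using fin by (rule measure_UNION_le) simp
    also have "\<dots> = (\<Sum>c\<in>C K. 2 * \<epsilon> K)"
      using eps[of K] by (intro sum.cong) auto
    also have "\<dots> = 2 * (real (card (C K)) * \<epsilon> K)"
      by simp
    finally show ?thesis
      using \<open>e > 0\<close> by (simp add: ball_eq_greaterThanLessThan)
  qed
  moreover have "(\<lambda>K. 2 * (real (card (C K)) * \<epsilon> K)) \<longlonglongrightarrow> 0"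
    using tendsto_mult_right_zero[OF thin] .
  ultimately have "2 * e \<le> 0"
    using LIMSEQ_le_const by blast
  then show False
    using \<open>e > 0\<close> by simp
qed

locale rational_base =
  fixes p q :: nat
  assumes q_gt_1: "1 < q" and q_less_p: "q < p" and coprime_pq: "coprime p q"
begin

lemma q_pos: "0 < q"
  using q_gt_1 by simp

lemma le_of_mult_less_mult_add: "a * q < b * q + q \<Longrightarrow> a \<le> b"
  using mult_less_cancel2[of a q "Suc b"] by simp

text \<open>The ceiling of (x p + b) / q: the state reached from x by the unique letter in [b, b + q)
  for which the transition is defined.\<close>
definition window_step :: "nat \<Rightarrow> nat \<Rightarrow> nat" where
  "window_step b x = (x * p + b + q - 1) div q"

abbreviation ceil_scale :: "nat \<Rightarrow> nat" where
  "ceil_scale \<equiv> window_step 0"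

definition floor_scale :: "nat \<Rightarrow> nat" where
  "floor_scale x = x * p div q"

lemma window_step_lower: "x * p + b \<le> window_step b x * q"
  using dividend_less_div_times[OF q_pos, of "x * p + b + q - 1"] q_pos
  unfolding window_step_def by linarith

lemma window_step_upper: "window_step b x * q < x * p + b + q"
  using div_times_less_eq_dividend[of "x * p + b + q - 1" q] q_pos
  unfolding window_step_def by linarith

lemma window_step_eqI:
  assumes "x * p + b \<le> t * q" and "t * q < x * p + b + q"
  shows "window_step b x = t"
  using le_of_mult_less_mult_add[of t "window_step b x"]
    le_of_mult_less_mult_add[of "window_step b x" t]
    window_step_lower[where x=x and b=b] window_step_upper[where x=x and b=b] assms
  by linarith

lemma floor_scale_lower: "floor_scale x * q \<le> x * p"
  unfolding floor_scale_def by simp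

lemma floor_scale_upper: "x * p < floor_scale x * q + q"
  using dividend_less_div_times[OF q_pos, of "x * p"] unfolding floor_scale_def by simp

lemma ceil_scale_Suc: "ceil_scale (Suc x) = Suc (window_step (p - q) x)"
proof (rule window_step_eqI)
  have "x * p + (p - q) \<le> window_step (p - q) x * q" "window_step (p - q) x * q < x * p + (p - q) + q"
    by (rule window_step_lower window_step_upper)+
  then show "Suc x * p + 0 \<le> Suc (window_step (p - q) x) * q"
    and "Suc (window_step (p - q) x) * q < Suc x * p + 0 + q"
    using q_less_p by simp_all
qed

lemma ceil_scale_add_mult: "ceil_scale (x + q * j) = ceil_scale x + p * j"
proof (rule window_step_eqI)
  have "x * p \<le> ceil_scale x * q" "ceil_scale x * q < x * p + q"
    using window_step_lower[where x=x and b=0] window_step_upper[where x=x and b=0] by simp_all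
  then show "(x + q * j) * p + 0 \<le> (ceil_scale x + p * j) * q"
    and "(ceil_scale x + p * j) * q < (x + q * j) * p + 0 + q"
    by (simp_all add: algebra_simps)
qed

lemma ceil_scale_0 [simp]: "ceil_scale 0 = 0"
  unfolding window_step_def using q_pos by simp

lemma ceil_scale_mono: "x \<le> y \<Longrightarrow> ceil_scale x \<le> ceil_scale y"
  unfolding window_step_def by (intro div_le_mono diff_le_mono) simp

lemma floor_scale_mono: "x \<le> y \<Longrightarrow> floor_scale x \<le> floor_scale y"
  unfolding floor_scale_def by (intro div_le_mono) simp

lemma ceil_scale_cases: "ceil_scale x = floor_scale x \<or> ceil_scale x = Suc (floor_scale x)"
proof -
  have "x * p \<le> ceil_scale x * q" "ceil_scale x * q < x * p + q"
    using window_step_lower[where x=x and b=0] window_step_upper[where x=x and b=0] by simp_all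
  moreover have "floor_scale x * q \<le> x * p" "x * p < floor_scale x * q + q"
    by (rule floor_scale_lower floor_scale_upper)+
  ultimately have "ceil_scale x \<le> Suc (floor_scale x)" and "floor_scale x \<le> ceil_scale x"
    by (simp_all add: le_of_mult_less_mult_add)
  then show ?thesis
    by linarith
qed

definition window_word :: "nat \<Rightarrow> nat \<Rightarrow> nat \<Rightarrow> nat" where
  "window_word b n k = window_step b ((window_step b ^^ k) n) * q - (window_step b ^^ k) n * p"

lemma labels_path_step:
  assumes "labels_path p q n w"
  shows "run p q n w (Suc i) * q = run p q n w i * p + w i"
  using assms unfolding labels_path_def tau_defined_def by (simp add: tau_def)

lemma run_window_word: "run p q n (window_word b n) k = (window_step b ^^ k) n"
proof (induction k)
  case (Suc k)
  let ?x = "(window_step b ^^ k) n"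
  have "?x * p \<le> window_step b ?x * q"
    using window_step_lower[where x="?x" and b=b] by simp
  then show ?case
    using Suc q_pos by (simp add: tau_def window_word_def)
qed simp

lemma window_word_bounds: "b \<le> window_word b n k" "window_word b n k < b + q"
  using window_step_lower[where x="(window_step b ^^ k) n" and b=b]
    window_step_upper[where x="(window_step b ^^ k) n" and b=b]
  unfolding window_word_def by linarith+

lemma labels_path_window_word:
  assumes "b + q \<le> p"
  shows "labels_path p q n (window_word b n)"
  unfolding labels_path_def tau_defined_def run_window_word
proof
  fix i
  let ?x = "(window_step b ^^ i) n"
  have "?x * p + window_word b n i = window_step b ?x * q"
    using window_step_lower[where x="?x" and b=b] unfolding window_word_def by simp
  then show "window_word b n i < p \<and> q dvd ?x * p + window_word b n i"
    using window_word_bounds(2)[of b n i] assms by simp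
qed

lemma window_word_unique:
  assumes window: "\<forall>i. b \<le> w i \<and> w i < b + q" and path: "labels_path p q n w"
  shows "w = window_word b n"
proof -
  have run: "run p q n w i = (window_step b ^^ i) n" for i
  proof (induction i)
    case (Suc i)
    have "window_step b (run p q n w i) = run p q n w (Suc i)"
      using labels_path_step[OF path, of i] window by (intro window_step_eqI) auto
    then show ?case
      using Suc by simp
  qed simp
  show ?thesis
  proof
    fix i
    have "w i = run p q n w (Suc i) * q - run p q n w i * p"
      using labels_path_step[OF path, of i] by simp
    then show "w i = window_word b n i"
      unfolding run window_word_def by simp
  qed
qed

lemma the_window_word:
  assumes "b + q \<le> p"
  shows "(THE w. (\<forall>i. b \<le> w i \<and> w i < b + q) \<and> labels_path p q n w) = window_word b n"
  using window_word_bounds labels_path_window_word[OF assms] window_word_unique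
  by (intro the_equality) auto

lemma run_min_word: "run p q n (min_word p q n) k = (ceil_scale ^^ k) n"
proof -
  have "min_word p q n = window_word 0 n"
    using the_window_word[of 0 n] q_less_p unfolding min_word_def by simp
  then show ?thesis
    by (simp add: run_window_word)
qed

lemma run_max_word: "Suc (run p q n (max_word p q n) k) = (ceil_scale ^^ k) (Suc n)"
proof -
  have "max_word p q n = window_word (p - q) n"
    using the_window_word[of "p - q" n] q_less_p unfolding max_word_def by simp
  then have "run p q n (max_word p q n) k = (window_step (p - q) ^^ k) n"
    by (simp add: run_window_word)
  also have "Suc \<dots> = (ceil_scale ^^ k) (Suc n)"
  proof (induction k)
    case (Suc k)
    then have "(ceil_scale ^^ Suc k) (Suc n) = ceil_scale (Suc ((window_step (p - q) ^^ k) n))"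
      by simp
    then show ?case
      by (simp add: ceil_scale_Suc)
  qed simp
  finally show ?thesis .
qed

lemma labels_path_min_word: "labels_path p q n (min_word p q n)"
  and labels_path_max_word: "labels_path p q n (max_word p q n)"
  using the_window_word[of 0 n] the_window_word[of "p - q" n] labels_path_window_word[of 0 n]
    labels_path_window_word[of "p - q" n] q_less_p
  unfolding min_word_def max_word_def by simp_all

definition r :: real where
  "r = real q / real p"

lemma r_pos: "0 < r" and r_less_1: "r < 1"
  unfolding r_def using q_pos q_less_p by auto

lemma p_mult_r_power: "real p * r ^ Suc k = real q * r ^ k"
  unfolding r_def using q_less_p by simp

lemma labels_path_rho:
  assumes path: "labels_path p q n w"
  shows "(\<lambda>k. real (run p q n w k) * r ^ k) \<longlonglongrightarrow> real n + rho p q w / real q"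
proof -
  define x where "x k = real (run p q n w k)" for k
  have x_Suc: "x (Suc k) * real q = x k * real p + real (w k)" for k
    using labels_path_step[OF path, of k] unfolding x_def by (metis of_nat_add of_nat_mult)
  have partial: "x k * r ^ k = real n + (\<Sum>i<k. real (w i) * r ^ Suc i) / real q" for k
  proof (induction k)
    case (Suc k)
    have "x (Suc k) * r ^ Suc k = (x k * real p + real (w k)) * r ^ Suc k / real q"
      using q_pos by (simp flip: x_Suc)
    also have "\<dots> = x k * (real p * r ^ Suc k) / real q + real (w k) * r ^ Suc k / real q"
      by (simp only: distrib_right add_divide_distrib mult.assoc)
    also have "\<dots> = x k * r ^ k + real (w k) * r ^ Suc k / real q"
      using q_pos by (simp only: p_mult_r_power) simp
    finally show ?case
      using Suc by (simp add: add_divide_distrib)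
  qed (simp add: x_def)
  have "summable (\<lambda>i. real (w i) * r ^ Suc i)"
  proof (rule summable_comparison_test')
    show "summable (\<lambda>i. real p * r * r ^ i)"
      using r_pos r_less_1 by (intro summable_mult summable_geometric) auto
    have "w i < p" for i
      using path unfolding labels_path_def tau_defined_def by blast
    then show "norm (real (w i) * r ^ Suc i) \<le> real p * r * r ^ i" for i
      using r_pos by (simp add: less_imp_le mult_right_mono)
  qed
  then have "(\<lambda>k. \<Sum>i<k. real (w i) * r ^ Suc i) \<longlonglongrightarrow> rho p q w"
    unfolding rho_def r_def by (rule summable_LIMSEQ)
  then have "(\<lambda>k. real n + (\<Sum>i<k. real (w i) * r ^ Suc i) / real q) \<longlonglongrightarrow> real n + rho p q w / real q"
    using q_pos by (intro tendsto_intros) simp_all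
  then show ?thesis
    unfolding partial[symmetric] x_def .
qed

definition gap :: "nat \<Rightarrow> nat \<Rightarrow> nat" where
  "gap n k = (ceil_scale ^^ k) (Suc n) - (ceil_scale ^^ k) n"

lemma ceil_scale_iter_mono: "m \<le> n \<Longrightarrow> (ceil_scale ^^ k) m \<le> (ceil_scale ^^ k) n"
  by (induction k) (simp_all add: ceil_scale_mono)

lemma gap_tendsto_span: "(\<lambda>k. real (gap n k) * r ^ k) \<longlonglongrightarrow> span p q n / real q"
proof -
  let ?M = "\<lambda>k. real (run p q n (max_word p q n) k)"
  let ?m = "\<lambda>k. real (run p q n (min_word p q n) k)"
  have "real (gap n k) * r ^ k = ?M k * r ^ k - ?m k * r ^ k + r ^ k" for k
  proof -
    have "(ceil_scale ^^ k) n \<le> (ceil_scale ^^ k) (Suc n)"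
      by (rule ceil_scale_iter_mono) simp
    then show ?thesis
      unfolding gap_def run_min_word run_max_word[symmetric] by (simp add: algebra_simps of_nat_diff)
  qed
  moreover have "(\<lambda>k. ?M k * r ^ k - ?m k * r ^ k + r ^ k) \<longlonglongrightarrow>
      (real n + rho p q (max_word p q n) / real q) - (real n + rho p q (min_word p q n) / real q) + 0"
    using r_pos r_less_1
    by (intro tendsto_intros labels_path_rho labels_path_max_word labels_path_min_word LIMSEQ_power_zero) auto
  ultimately show ?thesis
    unfolding span_def by (simp add: diff_divide_distrib)
qed

definition scaling_path :: "(nat \<Rightarrow> nat) \<Rightarrow> bool" where
  "scaling_path c \<longleftrightarrow> (\<forall>k. c (Suc k) = floor_scale (c k) \<or> c (Suc k) = ceil_scale (c k))"

definition \<delta> :: real where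
  "\<delta> = r / (1 - r)"

lemma \<delta>_pos: "0 < \<delta>"
  unfolding \<delta>_def using r_pos r_less_1 by simp

lemma scaling_step_bound:
  assumes "d = floor_scale c \<or> d = ceil_scale c"
  shows "\<bar>real d * r ^ Suc k - real c * r ^ k\<bar> \<le> r ^ Suc k"
proof -
  have "d * q \<le> c * p + q" and "c * p \<le> d * q + q"
    using assms floor_scale_lower[of c] floor_scale_upper[of c]
      window_step_lower[where x=c and b=0] window_step_upper[where x=c and b=0]
    by (elim disjE; simp)+
  then have "real d * real q \<le> real c * real p + real q" and "real c * real p \<le> real d * real q + real q"
    by (simp_all flip: of_nat_mult of_nat_add)
  then have bound: "\<bar>real d * real q - real c * real p\<bar> \<le> real q"
    unfolding abs_le_iff by linarith
  have "real d * r ^ Suc k - real c * r ^ k = (real d * real q - real c * real p) * r ^ Suc k / real q"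
    using q_pos p_mult_r_power[of k] by (simp add: field_simps)
  then have "\<bar>real d * r ^ Suc k - real c * r ^ k\<bar> = \<bar>real d * real q - real c * real p\<bar> * r ^ Suc k / real q"
    using r_pos by (simp add: abs_mult)
  also have "\<dots> \<le> real q * r ^ Suc k / real q"
    using bound r_pos by (intro divide_right_mono mult_right_mono) auto
  also have "\<dots> = r ^ Suc k"
    using q_pos by simp
  finally show ?thesis .
qed

lemma scaling_path_convergent:
  "scaling_path c \<Longrightarrow> convergent (\<lambda>k. real (c k) * r ^ k)"
  using r_pos r_less_1 scaling_step_bound unfolding scaling_path_def
  by (intro geometric_increments_convergent[of r]) auto

lemma scaling_path_tail:
  assumes "scaling_path c" and "(\<lambda>k. real (c k) * r ^ k) \<longlonglongrightarrow> L"
  shows "\<bar>L - real (c K) * r ^ K\<bar> \<le> \<delta> * r ^ K"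
  using r_pos r_less_1 scaling_step_bound assms unfolding scaling_path_def \<delta>_def
  by (intro geometric_increments_tail[of r]) auto

lemma ceil_scale_add_le: "ceil_scale (x + d) \<le> ceil_scale x + ceil_scale d"
proof (rule le_of_mult_less_mult_add)
  show "ceil_scale (x + d) * q < (ceil_scale x + ceil_scale d) * q + q"
    using window_step_upper[where x="x + d" and b=0] window_step_lower[where x=x and b=0]
      window_step_lower[where x=d and b=0]
    by (simp add: algebra_simps)
qed

lemma ceil_scale_add_ge: "ceil_scale x + floor_scale d \<le> ceil_scale (x + d)"
proof (rule le_of_mult_less_mult_add)
  show "(ceil_scale x + floor_scale d) * q < ceil_scale (x + d) * q + q"
    using window_step_upper[where x=x and b=0] window_step_lower[where x="x + d" and b=0]
      floor_scale_lower[of d]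
    by (simp add: algebra_simps)
qed

lemma gap_0 [simp]: "gap n 0 = 1"
  unfolding gap_def by simp

lemma ceil_scale_iter_Suc: "(ceil_scale ^^ k) (Suc n) = (ceil_scale ^^ k) n + gap n k"
  unfolding gap_def using ceil_scale_iter_mono[of n "Suc n" k] by simp

lemma gap_Suc: "gap n (Suc k) = ceil_scale ((ceil_scale ^^ k) n + gap n k) - ceil_scale ((ceil_scale ^^ k) n)"
  using ceil_scale_iter_Suc[of "Suc k" n] ceil_scale_iter_Suc[of k n] by simp

lemma scaling_path_gap: "scaling_path (gap n)"
  unfolding scaling_path_def gap_Suc
proof
  fix k
  let ?x = "(ceil_scale ^^ k) n" and ?d = "gap n k"
  have "ceil_scale ?x + floor_scale ?d \<le> ceil_scale (?x + ?d)" "ceil_scale (?x + ?d) \<le> ceil_scale ?x + ceil_scale ?d"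
    by (rule ceil_scale_add_ge ceil_scale_add_le)+
  with ceil_scale_cases[of ?d]
  show "ceil_scale (?x + ?d) - ceil_scale ?x = floor_scale ?d \<or> ceil_scale (?x + ?d) - ceil_scale ?x = ceil_scale ?d"
    by auto
qed

lemma span_near_gap: "\<bar>span p q n / real q - real (gap n K) * r ^ K\<bar> \<le> \<delta> * r ^ K"
  using scaling_path_tail[OF scaling_path_gap gap_tendsto_span] .

lemma ceil_scale_iter_add_mult:
  "k \<le> K \<Longrightarrow> (ceil_scale ^^ k) (n + q ^ K * t) = (ceil_scale ^^ k) n + p ^ k * q ^ (K - k) * t"
proof (induction k)
  case (Suc k)
  have "q ^ (K - k) = q * q ^ (K - Suc k)"
    using Suc.prems by (simp flip: power_Suc add: Suc_diff_Suc)
  then have "(ceil_scale ^^ Suc k) (n + q ^ K * t)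
      = ceil_scale ((ceil_scale ^^ k) n + q * (p ^ k * q ^ (K - Suc k) * t))"
    using Suc by (simp add: ac_simps)
  also have "\<dots> = (ceil_scale ^^ Suc k) n + p ^ Suc k * q ^ (K - Suc k) * t"
    by (simp add: ceil_scale_add_mult ac_simps)
  finally show ?case .
qed simp

lemma gap_add_mult: "k \<le> K \<Longrightarrow> gap (n + q ^ K * t) k = gap n k"
  using ceil_scale_iter_add_mult[of k K n t] ceil_scale_iter_add_mult[of k K "Suc n" t]
  unfolding gap_def by simp

lemma exists_dvd_add_power_mult: "\<exists>t. q dvd y + p ^ K * t"
proof -
  have "gcd (p ^ K) q = 1"
    using coprime_pq by simp
  then obtain u v where uv: "p ^ K * u = q * v + 1"
    using bezout_nat[of "p ^ K" q] q_less_p by auto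
  obtain m where m: "q = Suc m"
    using q_pos gr0_implies_Suc by blast
  have "p ^ K * (u * (m * y)) = (q * v + 1) * (m * y)"
    by (simp only: mult.assoc[symmetric] uv)
  then have "y + p ^ K * (u * (m * y)) = q * (y + v * m * y)"
    unfolding m by (simp add: algebra_simps)
  then show ?thesis
    by (metis dvd_triv_left)
qed

lemma ceil_scale_add_of_dvd:
  assumes "q dvd x"
  shows "ceil_scale (x + d) - ceil_scale x = ceil_scale d"
proof -
  obtain s where "x = q * s"
    using assms by blast
  then show ?thesis
    using ceil_scale_add_mult[of d s] ceil_scale_add_mult[of 0 s] by (simp add: add.commute)
qed

lemma ceil_scale_add_of_dvd_add:
  assumes "q dvd x + d"
  shows "ceil_scale (x + d) - ceil_scale x = floor_scale d"
proof -
  obtain s where s: "x + d = q * s"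
    using assms by blast
  have ceil_sum: "ceil_scale (q * s) = p * s"
    using ceil_scale_add_mult[of 0 s] by simp
  have "ceil_scale (x + d) \<le> ceil_scale x + floor_scale d"
  proof (rule le_of_mult_less_mult_add)
    have "ceil_scale (x + d) * q = (x + d) * p"
      unfolding s ceil_sum by (simp add: ac_simps)
    then show "ceil_scale (x + d) * q < (ceil_scale x + floor_scale d) * q + q"
      using window_step_lower[where x=x and b=0] floor_scale_upper[of d] by (simp add: algebra_simps)
  qed
  with ceil_scale_add_ge[of x d] show ?thesis
    by linarith
qed

lemma exists_shift_gap_Suc:
  assumes "d = floor_scale (gap n K) \<or> d = ceil_scale (gap n K)"
  shows "\<exists>t. gap (n + q ^ K * t) (Suc K) = d"
proof -
  let ?g = "gap n K"
  text \<open>Make q divide the state reached after K steps (to get the ceiling), or that state plus ?g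
    (to get the floor).\<close>
  define e where "e = (if d = ceil_scale ?g then 0 else ?g)"
  obtain t where t: "q dvd (ceil_scale ^^ K) n + e + p ^ K * t"
    using exists_dvd_add_power_mult by blast
  let ?x = "(ceil_scale ^^ K) (n + q ^ K * t)"
  have x: "?x = (ceil_scale ^^ K) n + p ^ K * t"
    using ceil_scale_iter_add_mult[of K K n t] by simp
  have "gap (n + q ^ K * t) (Suc K) = ceil_scale (?x + ?g) - ceil_scale ?x"
    using gap_Suc[of "n + q ^ K * t" K] gap_add_mult[of K K n t] by simp
  also have "\<dots> = d"
  proof (cases "d = ceil_scale ?g")
    case True
    then have "q dvd ?x"
      using t unfolding x e_def by (simp add: add.commute)
    then show ?thesis
      using True by (simp add: ceil_scale_add_of_dvd)
  next
    case False
    then have "q dvd ?x + ?g"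
      using t unfolding x e_def by (simp add: ac_simps)
    then show ?thesis
      using False assms by (simp add: ceil_scale_add_of_dvd_add)
  qed
  finally show ?thesis
    by blast
qed

lemma gap_realizes_scaling_path:
  assumes path: "scaling_path c" and start: "c 0 = 1"
  shows "\<exists>n. \<forall>k\<le>K. gap n k = c k"
proof (induction K)
  case 0
  show ?case
    using start by simp
next
  case (Suc K)
  then obtain n where n: "\<forall>k\<le>K. gap n k = c k"
    by blast
  then have "c (Suc K) = floor_scale (gap n K) \<or> c (Suc K) = ceil_scale (gap n K)"
    using path unfolding scaling_path_def by simp
  then obtain t where "gap (n + q ^ K * t) (Suc K) = c (Suc K)"
    using exists_shift_gap_Suc by blast
  moreover have "\<forall>k\<le>K. gap (n + q ^ K * t) k = c k"
    using n gap_add_mult by simp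
  ultimately have "\<forall>k\<le>Suc K. gap (n + q ^ K * t) k = c k"
    by (simp add: le_Suc_eq)
  then show ?case
    by blast
qed

primrec gap_values :: "nat \<Rightarrow> nat set" where
  "gap_values 0 = {1}"
| "gap_values (Suc k) = floor_scale ` gap_values k \<union> ceil_scale ` gap_values k"

lemma finite_gap_values: "finite (gap_values k)"
  by (induction k) auto

lemma card_gap_values_le: "card (gap_values k) \<le> 2 ^ k"
proof (induction k)
  case (Suc k)
  have "card (gap_values (Suc k)) \<le> card (floor_scale ` gap_values k) + card (ceil_scale ` gap_values k)"
    by (simp add: card_Un_le)
  also have "\<dots> \<le> card (gap_values k) + card (gap_values k)"
    by (intro add_mono card_image_le finite_gap_values)
  finally show ?case
    using Suc by simp
qed simp

lemma gap_in_gap_values: "gap n k \<in> gap_values k"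
proof (induction k)
  case (Suc k)
  then show ?case
    using scaling_path_gap[of n] unfolding scaling_path_def by auto
qed simp

lemma span_near_scaled_gap:
  "\<bar>span p q n - real q * real (gap n K) * r ^ K\<bar> \<le> real q * \<delta> * r ^ K"
proof -
  have "\<bar>span p q n - real q * real (gap n K) * r ^ K\<bar> = real q * \<bar>span p q n / real q - real (gap n K) * r ^ K\<bar>"
    using q_pos by (simp add: abs_mult_pos' flip: abs_mult) (simp add: algebra_simps)
  also have "\<dots> \<le> real q * \<delta> * r ^ K"
    using span_near_gap[of n K] q_pos by (simp add: mult.assoc)
  finally show ?thesis .
qed

theorem span_nowhere_dense:
  assumes "2 * q < p"
  shows "interior (closure (range (span p q))) = {}"
proof -
  define C where "C K = (\<lambda>d. real q * real d * r ^ K) ` gap_values K" for K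
  define \<epsilon> where "\<epsilon> K = real q * \<delta> * r ^ K" for K
  have cover: "range (span p q) \<subseteq> (\<Union>c\<in>C K. {c - \<epsilon> K .. c + \<epsilon> K})" for K
  proof clarify
    fix n
    have "span p q n \<in> {real q * real (gap n K) * r ^ K - \<epsilon> K .. real q * real (gap n K) * r ^ K + \<epsilon> K}"
      using span_near_scaled_gap[of n K] unfolding \<epsilon>_def atLeastAtMost_iff abs_le_iff by linarith
    then show "span p q n \<in> (\<Union>c\<in>C K. {c - \<epsilon> K .. c + \<epsilon> K})"
      unfolding C_def using gap_in_gap_values[of n K] by (intro UN_I[of "real q * real (gap n K) * r ^ K"] rev_image_eqI[of "gap n K"]) simp_all
  qed
  have "2 * r < 1"
    using assms q_less_p unfolding r_def by (simp add: field_simps)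
  then have majorant: "(\<lambda>K. real q * \<delta> * (2 * r) ^ K) \<longlonglongrightarrow> 0"
    using r_pos by (intro tendsto_mult_right_zero LIMSEQ_power_zero) simp_all
  have bound: "norm (real (card (C K)) * \<epsilon> K) \<le> real q * \<delta> * (2 * r) ^ K" for K
  proof -
    have "card (C K) \<le> card (gap_values K)"
      unfolding C_def by (rule card_image_le[OF finite_gap_values])
    also have "\<dots> \<le> 2 ^ K"
      by (rule card_gap_values_le)
    finally have "real (card (C K)) \<le> 2 ^ K"
      by (simp flip: of_nat_le_iff)
    moreover have "0 \<le> \<epsilon> K"
      unfolding \<epsilon>_def using \<delta>_pos r_pos by simp
    ultimately have "norm (real (card (C K)) * \<epsilon> K) \<le> 2 ^ K * \<epsilon> K"
      by (simp add: mult_right_mono)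
    also have "\<dots> = real q * \<delta> * (2 * r) ^ K"
      unfolding \<epsilon>_def by (simp add: power_mult_distrib)
    finally show ?thesis .
  qed
  have thin: "(\<lambda>K. real (card (C K)) * \<epsilon> K) \<longlonglongrightarrow> 0"
    using Lim_null_comparison[OF always_eventually[OF allI[OF bound]] majorant] .
  have "finite (C K)" and "0 \<le> \<epsilon> K" for K
    unfolding C_def \<epsilon>_def using finite_gap_values \<delta>_pos r_pos by simp_all
  then show ?thesis
    using interior_closure_empty_if_thin_covers[OF _ _ cover thin] by blast
qed

definition floor_limit :: "nat \<Rightarrow> real" where
  "floor_limit c = lim (\<lambda>k. real ((floor_scale ^^ k) c) * r ^ k)"

definition ceil_limit :: "nat \<Rightarrow> real" where
  "ceil_limit c = lim (\<lambda>k. real ((ceil_scale ^^ k) c) * r ^ k)"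

lemma floor_limit: "(\<lambda>k. real ((floor_scale ^^ k) c) * r ^ k) \<longlonglongrightarrow> floor_limit c"
  and ceil_limit: "(\<lambda>k. real ((ceil_scale ^^ k) c) * r ^ k) \<longlonglongrightarrow> ceil_limit c"
  unfolding floor_limit_def ceil_limit_def convergent_LIMSEQ_iff[symmetric]
  by (intro scaling_path_convergent; simp add: scaling_path_def)+

lemma orbit_limit_step:
  assumes "\<And>c. (\<lambda>k. real ((f ^^ k) c) * r ^ k) \<longlonglongrightarrow> L c"
  shows "L (f c) = L c / r"
proof -
  have "(\<lambda>k. real ((f ^^ Suc k) c) * r ^ Suc k / r) \<longlonglongrightarrow> L c / r"
    using LIMSEQ_Suc[OF assms[of c]] r_pos by (intro tendsto_divide) simp_all
  moreover have "(\<lambda>k. real ((f ^^ Suc k) c) * r ^ Suc k / r) = (\<lambda>k. real ((f ^^ k) (f c)) * r ^ k)"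
    using r_pos by (simp add: fun_eq_iff funpow_Suc_right del: funpow.simps)
  ultimately show ?thesis
    using LIMSEQ_unique[OF assms[of "f c"]] by simp
qed

lemma floor_limit_near: "\<bar>floor_limit c - real c\<bar> \<le> \<delta>"
  and ceil_limit_near: "\<bar>ceil_limit c - real c\<bar> \<le> \<delta>"
  using scaling_path_tail[OF _ floor_limit, of c 0] scaling_path_tail[OF _ ceil_limit, of c 0]
  by (simp_all add: scaling_path_def)

lemma ceil_limit_1: "ceil_limit 1 = rho p q (max_word p q 0) / real q"
proof -
  let ?M = "\<lambda>k. real (run p q 0 (max_word p q 0) k)"
  have "(\<lambda>k. ?M k * r ^ k + r ^ k) \<longlonglongrightarrow> (real 0 + rho p q (max_word p q 0) / real q) + 0"
    using r_pos r_less_1 by (intro tendsto_intros labels_path_rho labels_path_max_word LIMSEQ_power_zero) auto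
  moreover have "?M k * r ^ k + r ^ k = real ((ceil_scale ^^ k) 1) * r ^ k" for k
    using run_max_word[of 0 k, symmetric] by (simp add: algebra_simps)
  ultimately show ?thesis
    using LIMSEQ_unique[OF ceil_limit[of 1]] by simp
qed

text \<open>The greedy choice that keeps z / r^k between the floor and ceiling limits of the current value.\<close>
primrec approx_path :: "real \<Rightarrow> nat \<Rightarrow> nat" where
  "approx_path z 0 = 1"
| "approx_path z (Suc k) =
    (if z / r ^ Suc k \<le> ceil_limit (floor_scale (approx_path z k))
     then floor_scale (approx_path z k) else ceil_scale (approx_path z k))"

lemma scaling_path_approx_path: "scaling_path (approx_path z)"
  unfolding scaling_path_def by simp

context
  assumes p_less_2q: "p < 2 * q"
begin

lemma floor_scale_1: "floor_scale 1 = 1"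
  unfolding floor_scale_def using q_less_p p_less_2q by (simp add: div_nat_eqI)

lemma floor_limit_1: "floor_limit 1 = 0"
proof -
  have "(floor_scale ^^ k) 1 = 1" for k
    using floor_scale_1 by (induction k) simp_all
  then have "(\<lambda>k. real ((floor_scale ^^ k) 1) * r ^ k) \<longlonglongrightarrow> 0"
    using r_pos r_less_1 by (simp add: LIMSEQ_power_zero)
  then show ?thesis
    using LIMSEQ_unique[OF floor_limit[of 1]] by simp
qed

lemma floor_scale_Suc_le: "floor_scale (Suc u) \<le> Suc (ceil_scale u)"
proof (rule le_of_mult_less_mult_add)
  show "floor_scale (Suc u) * q < Suc (ceil_scale u) * q + q"
    using floor_scale_lower[of "Suc u"] window_step_lower[where x=u and b=0] p_less_2q by simp
qed

lemma floor_limit_Suc_le: "floor_limit (Suc d) \<le> ceil_limit d"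
proof (rule LIMSEQ_le[OF floor_limit])
  have orbits: "(floor_scale ^^ k) (Suc d) \<le> Suc ((ceil_scale ^^ k) d)" for k
  proof (induction k)
    case (Suc k)
    then show ?case
      using floor_scale_mono[OF Suc] floor_scale_Suc_le[of "(ceil_scale ^^ k) d"] by simp
  qed simp
  have "real ((floor_scale ^^ k) (Suc d)) * r ^ k \<le> real ((ceil_scale ^^ k) d) * r ^ k + r ^ k" for k
  proof -
    have "real ((floor_scale ^^ k) (Suc d)) * r ^ k \<le> real (Suc ((ceil_scale ^^ k) d)) * r ^ k"
      using orbits[of k] r_pos by (intro mult_right_mono) simp_all
    then show ?thesis
      by (simp add: algebra_simps)
  qed
  then show "\<exists>N. \<forall>k\<ge>N. real ((floor_scale ^^ k) (Suc d)) * r ^ k \<le> real ((ceil_scale ^^ k) d) * r ^ k + r ^ k"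
    by blast
  show "(\<lambda>k. real ((ceil_scale ^^ k) d) * r ^ k + r ^ k) \<longlonglongrightarrow> ceil_limit d"
    using tendsto_add[OF ceil_limit[of d] LIMSEQ_power_zero[of r]] r_pos r_less_1 by simp
qed

lemma approx_path_between:
  assumes "0 \<le> z" and "z \<le> ceil_limit 1"
  shows "floor_limit (approx_path z k) \<le> z / r ^ k \<and> z / r ^ k \<le> ceil_limit (approx_path z k)"
proof (induction k)
  case 0
  show ?case
    using assms floor_limit_1 by simp
next
  case (Suc k)
  let ?c = "approx_path z k" and ?y = "z / r ^ Suc k"
  have y: "?y = z / r ^ k / r"
    by simp
  have "floor_limit (floor_scale ?c) = floor_limit ?c / r"
    by (rule orbit_limit_step[OF floor_limit])
  also have "\<dots> \<le> ?y"
    unfolding y using Suc r_pos by (intro divide_right_mono) auto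
  finally have lower: "floor_limit (floor_scale ?c) \<le> ?y" .
  have "?y \<le> ceil_limit ?c / r"
    unfolding y using Suc r_pos by (intro divide_right_mono) auto
  also have "\<dots> = ceil_limit (ceil_scale ?c)"
    by (rule orbit_limit_step[OF ceil_limit, symmetric])
  finally have upper: "?y \<le> ceil_limit (ceil_scale ?c)" .
  show ?case
  proof (cases "?y \<le> ceil_limit (floor_scale ?c)")
    case True
    then show ?thesis
      using lower by simp
  next
    case False
    moreover have "floor_limit (ceil_scale ?c) \<le> ?y"
      using ceil_scale_cases[of ?c] lower floor_limit_Suc_le[of "floor_scale ?c"] False by auto
    ultimately show ?thesis
      using upper by simp
  qed
qed

lemma approx_path_near:
  assumes "0 \<le> z" and "z \<le> ceil_limit 1"
  shows "\<bar>z - real (approx_path z k) * r ^ k\<bar> \<le> \<delta> * r ^ k"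
proof -
  have "\<bar>z / r ^ k - real (approx_path z k)\<bar> \<le> \<delta>"
    using approx_path_between[OF assms, of k] floor_limit_near[of "approx_path z k"]
      ceil_limit_near[of "approx_path z k"]
    by linarith
  then have "\<bar>z / r ^ k - real (approx_path z k)\<bar> * r ^ k \<le> \<delta> * r ^ k"
    using r_pos by (simp add: mult_right_mono)
  moreover have "\<bar>z / r ^ k - real (approx_path z k)\<bar> * r ^ k = \<bar>z - real (approx_path z k) * r ^ k\<bar>"
    using r_pos by (simp add: abs_mult_pos flip: abs_mult) (simp add: algebra_simps)
  ultimately show ?thesis
    by simp
qed

lemma exists_span_near:
  assumes "0 \<le> z" and "z \<le> ceil_limit 1"
  shows "\<exists>n. \<bar>span p q n - real q * z\<bar> \<le> 2 * real q * \<delta> * r ^ K"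
proof -
  obtain n where n: "gap n K = approx_path z K"
    using gap_realizes_scaling_path[OF scaling_path_approx_path approx_path.simps(1), of K] by blast
  have "\<bar>span p q n / real q - z\<bar> \<le> 2 * \<delta> * r ^ K"
    using span_near_gap[of n K, unfolded n] approx_path_near[OF assms, of K]
    unfolding abs_le_iff by linarith
  moreover have "span p q n - real q * z = real q * (span p q n / real q - z)"
    using q_pos by (simp add: field_simps)
  ultimately have "\<bar>span p q n - real q * z\<bar> \<le> real q * (2 * \<delta> * r ^ K)"
    using q_pos by (simp add: abs_mult mult_left_mono)
  then show ?thesis
    by (auto simp: mult_ac)
qed

theorem span_dense: "{0 .. rho p q (max_word p q 0)} \<subseteq> closure (range (span p q))"
proof
  fix y
  assume "y \<in> {0 .. rho p q (max_word p q 0)}"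
  then have z: "0 \<le> y / real q" "y / real q \<le> ceil_limit 1"
    using q_pos unfolding ceil_limit_1 by (auto intro: divide_right_mono)
  show "y \<in> closure (range (span p q))"
    unfolding closure_approachable
  proof (intro allI impI)
    fix e :: real
    assume "0 < e"
    have "(\<lambda>K. 2 * real q * \<delta> * r ^ K) \<longlonglongrightarrow> 0"
      using r_pos r_less_1 by (intro tendsto_mult_right_zero LIMSEQ_power_zero) simp_all
    then have "eventually (\<lambda>K. 2 * real q * \<delta> * r ^ K < e) sequentially"
      using \<open>0 < e\<close> by (rule order_tendstoD(2))
    then obtain K where K: "2 * real q * \<delta> * r ^ K < e"
      unfolding eventually_sequentially by blast
    obtain n where "\<bar>span p q n - real q * (y / real q)\<bar> \<le> 2 * real q * \<delta> * r ^ K"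
      using exists_span_near[OF z] by blast
    then have "dist (span p q n) y < e"
      using K q_pos by (simp add: dist_real_def)
    then show "\<exists>x\<in>range (span p q). dist x y < e"
      by blast
  qed
qed

end

end

theorem mainTheorem10:
  fixes p q :: nat
  assumes "q > 1" and "p > q" and "coprime p q"
  shows "(p < 2 * q \<longrightarrow>
            {0 .. rho p q (max_word p q 0)} \<subseteq> closure (range (span p q)))
       \<and> (p > 2 * q \<longrightarrow> interior (closure (range (span p q))) = {})"
proof -
  interpret rational_base p q
    using assms by unfold_locales
  show ?thesis
    using span_dense span_nowhere_dense by blast
qed

end
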